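(* Let $a,d,k,c$ be positive integers such that $\gcd(a,a+d,\ldots,a+kd,c)=1$, and let $\mathcal{S}=\langle a,a+d,a+2d,\ldots,a+kd,c\rangle$. Then $\mathrm{type}(\mathcal{S})\le 2k$.
   Context: $\langle b_1,\ldots,b_t\rangle$ denotes the numerical semigroup of all non-negative integer linear combinations of $b_1,\ldots,b_t$ (such semigroups with generators $a,a+d,\ldots,a+kd,c$ are called AA-semigroups). A pseudo-Frobenius number of a numerical semigroup $\mathcal{S}$ is an integer $x\notin\mathcal{S}$ with $x+s\in\mathcal{S}$ for every nonzero $s\in\mathcal{S}$; $\mathrm{type}(\mathcal{S})$ is the number of pseudo-Frobenius numbers. *)

theory Defs
  imports Main
begin

definition gen_semigroup :: "nat set \<Rightarrow> int set" where
  "gen_semigroup G = {int (\<Sum>g\<in>G. f g * g) | f :: nat \<Rightarrow> nat. True}"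

definition pseudo_frobenius :: "int set \<Rightarrow> int set" where
  "pseudo_frobenius S = {x. x \<notin> S \<and> (\<forall>s\<in>S. s \<noteq> 0 \<longrightarrow> x + s \<in> S)}"

definition semigroup_type :: "int set \<Rightarrow> nat" where
  "semigroup_type S = card (pseudo_frobenius S)"

end

theory Submission
  imports Defs
begin

text \<open>Write \<open>S = T + \<nat>c\<close> with \<open>T = \<langle>a, a + d, \<dots>, a + kd\<rangle>\<close>, whose elements are the
  \<open>j a + m d\<close> with \<open>0 \<le> m \<le> j k\<close>. For a pseudo-Frobenius number \<open>x\<close>, \<open>x + c\<close> lies in \<open>T\<close>
  but no \<open>x + c - N c\<close> with \<open>N \<ge> 1\<close> does. Attach to \<open>x\<close> the index sum \<open>m\<close> of a representation
  of \<open>x + c\<close> with fewest generators. If the representations of \<open>x\<close> and \<open>x'\<close> are comparable in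
  the coordinates \<open>(m, j k - m)\<close>, then \<open>x' - x \<in> T\<close> forces \<open>x = x'\<close>. If they are incomparable
  but \<open>m \<equiv> m' (mod k)\<close>, adding \<open>s (a + k d)\<close> to \<open>x\<close> produces a multiple of \<open>c\<close> in \<open>T\<close>
  squeezed between them, and comparing it with the least positive multiple of \<open>c\<close> in \<open>T\<close> shows
  that \<open>m\<close> and \<open>m'\<close> lie on opposite sides of that multiple's index sum \<open>ms\<close>. Hence
  \<open>x \<mapsto> (m mod k, m < ms)\<close> is injective, giving at most \<open>2 k\<close> pseudo-Frobenius numbers.\<close>

lemma zero_in_gen_semigroup: "0 \<in> gen_semigroup G"
  unfolding gen_semigroup_def by (rule CollectI, rule exI[of _ "\<lambda>_. 0"]) simp

lemma generator_in_gen_semigroup: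
  assumes "finite G" "g \<in> G"
  shows "int g \<in> gen_semigroup G"
proof -
  have "(\<Sum>h\<in>G. (if h = g then 1 else 0) * h) = (\<Sum>h\<in>G. if h = g then h else 0)"
    by (rule sum.cong) auto
  also have "\<dots> = g"
    using assms by simp
  finally show ?thesis
    unfolding gen_semigroup_def by (intro CollectI exI[of _ "\<lambda>h. if h = g then 1 else 0"]) simp
qed

lemma gen_semigroup_add:
  assumes "v \<in> gen_semigroup G" "w \<in> gen_semigroup G"
  shows "v + w \<in> gen_semigroup G"
proof -
  obtain f f' where "v = int (\<Sum>g\<in>G. f g * g)" "w = int (\<Sum>g\<in>G. f' g * g)"
    using assms unfolding gen_semigroup_def by auto
  then have "v + w = int (\<Sum>g\<in>G. (f g + f' g) * g)"
    by (simp add: distrib_right sum.distrib)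
  then show ?thesis
    unfolding gen_semigroup_def by (intro CollectI exI[of _ "\<lambda>g. f g + f' g"]) simp
qed

lemma gen_semigroup_least:
  assumes "0 \<in> X" "\<And>g. g \<in> G \<Longrightarrow> int g \<in> X"
    and add: "\<And>v w. v \<in> X \<Longrightarrow> w \<in> X \<Longrightarrow> v + w \<in> X"
  shows "gen_semigroup G \<subseteq> X"
proof
  fix v assume "v \<in> gen_semigroup G"
  then obtain f where f: "v = int (\<Sum>g\<in>G. f g * g)"
    unfolding gen_semigroup_def by auto
  have multiple: "int (n * g) \<in> X" if "g \<in> G" for n g
    by (induction n) (use assms that in auto)
  have "int (\<Sum>g\<in>H. f g * g) \<in> X" if "H \<subseteq> G" for H
    using that
  proof (induction H rule: infinite_finite_induct)
    case (insert g H)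
    then show ?case
      using multiple add by auto
  qed (use assms in auto)
  then show "v \<in> X"
    using f by blast
qed

lemma gen_semigroup_aa:
  fixes a d k c :: nat
  assumes "0 < k"
  shows "gen_semigroup ({a + i * d | i. i \<le> k} \<union> {c}) =
    {j * int a + m * int d + n * int c | j m n. 0 \<le> m \<and> m \<le> j * int k \<and> 0 \<le> n}"
    (is "gen_semigroup ?G = ?S")
proof
  show "gen_semigroup ?G \<subseteq> ?S"
  proof (rule gen_semigroup_least)
    show "0 \<in> ?S"
      by (intro CollectI exI[of _ 0]) simp
    show "int g \<in> ?S" if "g \<in> ?G" for g
      using that
    proof
      assume "g \<in> {a + i * d | i. i \<le> k}"
      then obtain i where "i \<le> k" "g = a + i * d"
        by blast
      then show ?thesis
        by (intro CollectI exI[of _ 1] exI[of _ "int i"] exI[of _ 0]) auto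
    qed (intro CollectI exI[of _ 0] exI[of _ 0] exI[of _ 1]; simp)
    show "v + w \<in> ?S" if vw: "v \<in> ?S" "w \<in> ?S" for v w
    proof -
      obtain j m n j' m' n' where
        "0 \<le> m" "m \<le> j * int k" "0 \<le> n" "v = j * int a + m * int d + n * int c"
        "0 \<le> m'" "m' \<le> j' * int k" "0 \<le> n'" "w = j' * int a + m' * int d + n' * int c"
        using vw by blast
      then show ?thesis
        by (intro CollectI exI[of _ "j + j'"] exI[of _ "m + m'"] exI[of _ "n + n'"])
          (simp add: algebra_simps)
    qed
  qed
next
  have fin: "finite ?G"
    by (simp add: setcompr_eq_image)
  have progression: "int (J * a + m * d) \<in> gen_semigroup ?G" if "m \<le> J * k" for J m
    using that
  proof (induction J arbitrary: m)
    case 0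
    then show ?case
      using zero_in_gen_semigroup by simp
  next
    case (Suc J)
    define i where "i = min m k"
    have "i \<le> m"
      by (simp add: i_def)
    then obtain r where "m = i + r"
      using le_Suc_ex by blast
    then have split: "int (Suc J * a + m * d) = int (a + i * d) + int (J * a + (m - i) * d)"
      by (simp add: algebra_simps)
    have "a + i * d \<in> ?G"
      by (auto simp: i_def)
    then have "int (a + i * d) \<in> gen_semigroup ?G"
      by (rule generator_in_gen_semigroup[OF fin])
    moreover have "m - i \<le> J * k"
      using Suc.prems unfolding i_def by (cases "m \<le> k") auto
    then have "int (J * a + (m - i) * d) \<in> gen_semigroup ?G"
      by (rule Suc.IH)
    ultimately show ?case
      unfolding split by (rule gen_semigroup_add)
  qed
  have c: "int c \<in> gen_semigroup ?G"
    by (rule generator_in_gen_semigroup[OF fin]) simp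
  have c_multiple: "int (n * c) \<in> gen_semigroup ?G" for n
  proof (induction n)
    case (Suc n)
    have "int (Suc n * c) = int c + int (n * c)"
      by simp
    then show ?case
      using gen_semigroup_add[OF c Suc.IH] by argo
  qed (simp add: zero_in_gen_semigroup)
  show "?S \<subseteq> gen_semigroup ?G"
  proof
    fix v assume "v \<in> ?S"
    then obtain j m n where jmn: "0 \<le> m" "m \<le> j * int k" "0 \<le> n"
        "v = j * int a + m * int d + n * int c"
      by blast
    then have "0 \<le> j * int k"
      by linarith
    then have "0 \<le> j"
      using assms by (simp add: zero_le_mult_iff)
    then have "nat m \<le> nat j * k"
      using nat_mono[OF jmn(2)] by (simp add: nat_mult_distrib)
    then have "int (nat j * a + nat m * d) + int (nat n * c) \<in> gen_semigroup ?G"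
      by (rule gen_semigroup_add[OF progression c_multiple])
    moreover have "v = int (nat j * a + nat m * d) + int (nat n * c)"
      using jmn \<open>0 \<le> j\<close> by simp
    ultimately show "v \<in> gen_semigroup ?G"
      by simp
  qed
qed

locale aa_semigroup =
  fixes a d k c :: int
  assumes pos: "0 < a" "0 < d" "0 < k" "0 < c"
begin

definition S :: "int set" where
  "S = {j * a + m * d + n * c | j m n. 0 \<le> m \<and> m \<le> j * k \<and> 0 \<le> n}"

text \<open>\<open>ap_rep v j m\<close>: \<open>v\<close> is a sum of \<open>j\<close> generators \<open>a + i * d\<close> (\<open>0 \<le> i \<le> k\<close>)
  whose indices add up to \<open>m\<close>; the slack \<open>j * k - m\<close> measures how far each index could still grow.\<close>
definition ap_rep :: "int \<Rightarrow> int \<Rightarrow> int \<Rightarrow> bool" where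
  "ap_rep v j m \<longleftrightarrow> 0 \<le> m \<and> m \<le> j * k \<and> v = j * a + m * d"

definition min_ap_rep :: "int \<Rightarrow> int \<Rightarrow> int \<Rightarrow> bool" where
  "min_ap_rep v j m \<longleftrightarrow> ap_rep v j m \<and> (\<forall>j' m'. ap_rep v j' m' \<longrightarrow> j \<le> j')"

definition least_c_rep :: "int \<Rightarrow> int \<Rightarrow> int \<Rightarrow> bool" where
  "least_c_rep N j m \<longleftrightarrow> 1 \<le> N \<and> min_ap_rep (N * c) j m \<and>
     (\<forall>N' j' m'. 1 \<le> N' \<and> ap_rep (N' * c) j' m' \<longrightarrow> N \<le> N')"

abbreviation PF :: "int set" where
  "PF \<equiv> pseudo_frobenius S"

lemma mem_S_iff: "v \<in> S \<longleftrightarrow> (\<exists>n j m. 0 \<le> n \<and> ap_rep (v - n * c) j m)"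
proof
  assume "v \<in> S"
  then obtain j m n where "0 \<le> m" "m \<le> j * k" "0 \<le> n" "v = j * a + m * d + n * c"
    unfolding S_def by blast
  then show "\<exists>n j m. 0 \<le> n \<and> ap_rep (v - n * c) j m"
    unfolding ap_rep_def by (intro exI[of _ n] exI[of _ j] exI[of _ m]) simp
next
  assume "\<exists>n j m. 0 \<le> n \<and> ap_rep (v - n * c) j m"
  then obtain n j m where "0 \<le> n" "ap_rep (v - n * c) j m"
    by blast
  then show "v \<in> S"
    unfolding S_def ap_rep_def by (intro CollectI exI[of _ j] exI[of _ m] exI[of _ n]) auto
qed

lemma ap_rep_in_S: "ap_rep v j m \<Longrightarrow> v \<in> S"
  unfolding mem_S_iff by (intro exI[of _ 0] exI[of _ j] exI[of _ m]) simp

lemma c_in_S: "c \<in> S"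
  unfolding mem_S_iff ap_rep_def by (intro exI[of _ 1] exI[of _ 0]) simp

lemma ap_rep_j_nonneg:
  assumes "ap_rep v j m"
  shows "0 \<le> j"
proof -
  have "0 \<le> j * k"
    using assms unfolding ap_rep_def by linarith
  then show ?thesis
    using pos(3) by (simp add: zero_le_mult_iff)
qed

lemma ap_rep_diff:
  assumes "ap_rep v j m" "ap_rep w j' m'" "m \<le> m'" "j * k - m \<le> j' * k - m'"
  shows "ap_rep (w - v) (j' - j) (m' - m)"
  using assms unfolding ap_rep_def by (simp add: algebra_simps)

lemma ap_rep_j_less:
  assumes "ap_rep v j m" "ap_rep v j' m'" "m < m'"
  shows "j' < j"
proof -
  have "(j - j') * a = (m' - m) * d"
    using assms(1,2) unfolding ap_rep_def by (simp add: algebra_simps)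
  moreover have "0 < (m' - m) * d"
    using assms(3) pos(2) by simp
  ultimately have "0 < (j - j') * a"
    by simp
  then show ?thesis
    using pos(1) by (simp add: zero_less_mult_iff)
qed

lemma ex_min_ap_rep:
  assumes "ap_rep v j m"
  obtains j0 m0 where "min_ap_rep v j0 m0"
proof -
  have "\<exists>n::nat. \<exists>m. ap_rep v (int n) m"
    using assms ap_rep_j_nonneg by (intro exI[of _ "nat j"]) auto
  then obtain m0 where "ap_rep v (int (LEAST n. \<exists>m. ap_rep v (int n) m)) m0"
    using LeastI_ex[of "\<lambda>n. \<exists>m. ap_rep v (int n) m"] by blast
  moreover have "int (LEAST n. \<exists>m. ap_rep v (int n) m) \<le> j'" if "ap_rep v j' m'" for j' m'
    using that ap_rep_j_nonneg[OF that] Least_le[of "\<lambda>n. \<exists>m. ap_rep v (int n) m" "nat j'"]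
    by fastforce
  ultimately show ?thesis
    using that unfolding min_ap_rep_def by blast
qed

lemma ex_least_c_rep:
  assumes "1 \<le> N" "ap_rep (N * c) j m"
  obtains Ns js ms where "least_c_rep Ns js ms"
proof -
  let ?P = "\<lambda>n::nat. \<exists>j m. ap_rep ((int n + 1) * c) j m"
  have "?P (nat (N - 1))"
    using assms by auto
  then obtain j0 m0 where "ap_rep ((int (Least ?P) + 1) * c) j0 m0"
    using LeastI_ex[of ?P] by blast
  then obtain js ms where "min_ap_rep ((int (Least ?P) + 1) * c) js ms"
    by (rule ex_min_ap_rep)
  moreover have "int (Least ?P) + 1 \<le> N'" if "1 \<le> N'" "ap_rep (N' * c) j' m'" for N' j' m'
    using that Least_le[of ?P "nat (N' - 1)"] by fastforce
  ultimately show ?thesis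
    using that unfolding least_c_rep_def by (meson le_add_same_cancel2 of_nat_0_le_iff)
qed

lemma PF_not_in_S: "x \<in> PF \<Longrightarrow> x \<notin> S"
  unfolding pseudo_frobenius_def by auto

lemma PF_add_in_S: "x \<in> PF \<Longrightarrow> s \<in> S \<Longrightarrow> s \<noteq> 0 \<Longrightarrow> x + s \<in> S"
  unfolding pseudo_frobenius_def by auto

lemma PF_no_rep_below:
  assumes "x \<in> PF" "1 \<le> N"
  shows "\<not> ap_rep (x + c - N * c) j m"
proof
  assume "ap_rep (x + c - N * c) j m"
  then have "x \<in> S"
    using assms(2) unfolding mem_S_iff
    by (intro exI[of _ "N - 1"] exI[of _ j] exI[of _ m]) (auto simp: algebra_simps)
  then show False
    using PF_not_in_S[OF assms(1)] by simp
qed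

lemma PF_ex_rep:
  assumes "x \<in> PF"
  obtains j m where "ap_rep (x + c) j m"
proof -
  have "x + c \<in> S"
    using PF_add_in_S[OF assms c_in_S] pos(4) by simp
  then obtain n j m where "0 \<le> n" "ap_rep (x + c - n * c) j m"
    unfolding mem_S_iff by blast
  moreover have "n = 0"
    using PF_no_rep_below[OF assms, of n] calculation by force
  ultimately show ?thesis
    using that by simp
qed

lemma PF_rep_eq:
  assumes "x \<in> PF" "x' \<in> PF" "ap_rep (x + c) j m" "ap_rep (x' + c) j' m'"
    and "m \<le> m'" "j * k - m \<le> j' * k - m'"
  shows "x = x'"
proof (rule ccontr)
  assume "x \<noteq> x'"
  have "ap_rep (x' - x) (j' - j) (m' - m)"
    using ap_rep_diff[OF assms(3-6)] by simp
  then have "x + (x' - x) \<in> S"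
    using PF_add_in_S[OF assms(1) ap_rep_in_S] \<open>x \<noteq> x'\<close> by force
  then show False
    using PF_not_in_S[OF assms(2)] by simp
qed

lemma PF_c_multiple_between:
  assumes PF: "x \<in> PF" "x' \<in> PF"
    and reps: "ap_rep (x + c) j m" "ap_rep (x' + c) j' m'"
    and "m < m'" "k dvd m' - m"
  obtains N jg mg where "1 \<le> N" "ap_rep (N * c) jg mg" "mg \<le> m'" "jg * k - mg \<le> j * k - m"
proof -
  obtain s where s: "m' - m = k * s"
    using \<open>k dvd m' - m\<close> by blast
  with \<open>m < m'\<close> have "0 < k * s"
    by linarith
  then have "1 \<le> s"
    using pos(3) by (simp add: zero_less_mult_iff)
  \<comment> \<open>\<open>u = s (a + k d)\<close> raises the index sum from \<open>m\<close> to \<open>m'\<close> without changing the slack\<close>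
  define u where "u = s * a + (s * k) * d"
  have u: "ap_rep u s (s * k)"
    unfolding ap_rep_def u_def using \<open>1 \<le> s\<close> pos by simp
  have "0 < u"
    unfolding u_def using \<open>1 \<le> s\<close> pos by (simp add: add_pos_pos)
  then have "x + u \<in> S"
    using PF_add_in_S[OF PF(1) ap_rep_in_S[OF u]] by simp
  then obtain n jt mt where "0 \<le> n" and t: "ap_rep (x + u - n * c) jt mt"
    unfolding mem_S_iff by blast
  define N jg mg where "N = n + 1" and "jg = j + s - jt" and "mg = m' - mt"
  have Nc: "N * c = jg * a + mg * d"
    using reps(1) t s unfolding ap_rep_def N_def jg_def mg_def u_def by (simp add: algebra_simps)
  have "m < mg"
  proof (rule ccontr)
    assume "\<not> m < mg"
    then have "ap_rep (x + u - n * c - u) (jt - s) (mt - s * k)"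
      using ap_rep_diff[OF u t] t s unfolding ap_rep_def mg_def by (simp add: algebra_simps)
    then show False
      using PF_no_rep_below[OF PF(1), of N] \<open>0 \<le> n\<close> by (simp add: N_def algebra_simps)
  qed
  have "j' * k - m' < jg * k - mg"
  proof (rule ccontr)
    assume "\<not> j' * k - m' < jg * k - mg"
    then have "ap_rep (x' + c - N * c) (j' - jg) (m' - mg)"
      using reps(2) t Nc unfolding ap_rep_def mg_def by (simp add: algebra_simps)
    then show False
      using PF_no_rep_below[OF PF(2)] \<open>0 \<le> n\<close> by (simp add: N_def)
  qed
  moreover have "ap_rep (N * c) jg mg"
    using Nc \<open>m < mg\<close> calculation reps unfolding ap_rep_def by auto
  moreover have "mg \<le> m'" "jg * k - mg \<le> j * k - m"
    using t s unfolding ap_rep_def mg_def jg_def by (auto simp: algebra_simps)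
  ultimately show ?thesis
    using that[of N jg mg] \<open>0 \<le> n\<close> by (simp add: N_def)
qed

lemma least_c_rep_m_le:
  assumes "x \<in> PF" "min_ap_rep (x + c) j m" "least_c_rep Ns js ms"
    and "1 \<le> N" "ap_rep (N * c) jg mg" "jg * k - mg \<le> j * k - m"
  shows "ms \<le> mg"
proof (rule ccontr)
  assume "\<not> ms \<le> mg"
  have least: "1 \<le> Ns" "ap_rep (Ns * c) js ms" "Ns \<le> N"
    using assms(3-5) unfolding least_c_rep_def min_ap_rep_def by auto
  have rep: "ap_rep (x + c - (N - Ns) * c) (j - jg + js) (m - mg + ms)"
    using assms(2,5,6) least(2) \<open>\<not> ms \<le> mg\<close>
    unfolding min_ap_rep_def ap_rep_def by (auto simp: algebra_simps)
  show False
  proof (cases "N = Ns")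
    case True
    then have "js < jg"
      using ap_rep_j_less assms(5) least(2) \<open>\<not> ms \<le> mg\<close> by auto
    then show False
      using rep assms(2) True unfolding min_ap_rep_def by fastforce
  next
    case False
    then show False
      using rep PF_no_rep_below[OF assms(1)] least(3) by auto
  qed
qed

lemma least_c_rep_slack_le:
  assumes "x \<in> PF" "ap_rep (x + c) j m" "least_c_rep Ns js ms"
    and "1 \<le> N" "ap_rep (N * c) jg mg" "mg \<le> m"
  shows "js * k - ms \<le> jg * k - mg"
proof (rule ccontr)
  assume "\<not> js * k - ms \<le> jg * k - mg"
  have least: "1 \<le> Ns" "min_ap_rep (Ns * c) js ms" "Ns \<le> N"
    using assms(3-5) unfolding least_c_rep_def by auto
  show False
  proof (cases "N = Ns")
    case True
    then have "js \<le> jg"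
      using least(2) assms(5) unfolding min_ap_rep_def by blast
    then have "mg \<le> ms"
      using ap_rep_j_less[of "N * c" js ms jg mg] assms(5) least(2) True
      unfolding min_ap_rep_def by fastforce
    then show False
      using \<open>js \<le> jg\<close> \<open>\<not> js * k - ms \<le> jg * k - mg\<close> pos(3) mult_right_mono[of js jg k] by linarith
  next
    case False
    have "ap_rep (x + c - (N - Ns) * c) (j - jg + js) (m - mg + ms)"
      using assms(2,5,6) least(2) \<open>\<not> js * k - ms \<le> jg * k - mg\<close>
      unfolding min_ap_rep_def ap_rep_def by (auto simp: algebra_simps)
    then show False
      using False PF_no_rep_below[OF assms(1)] least(3) by auto
  qed
qed

lemma PF_slack_less_least_c_rep:
  assumes "x \<in> PF" "ap_rep (x + c) j m" "least_c_rep Ns js ms" "ms \<le> m"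
  shows "j * k - m < js * k - ms"
proof (rule ccontr)
  assume "\<not> j * k - m < js * k - ms"
  then have "ap_rep (x + c - Ns * c) (j - js) (m - ms)"
    using ap_rep_diff[of "Ns * c" js ms] assms(2-4) unfolding least_c_rep_def min_ap_rep_def by auto
  then show False
    using PF_no_rep_below[OF assms(1)] assms(3) unfolding least_c_rep_def by blast
qed

lemma PF_eq_of_same_label:
  assumes PF: "x \<in> PF" "x' \<in> PF"
    and min_reps: "min_ap_rep (x + c) j m" "min_ap_rep (x' + c) j' m'"
    and "m mod k = m' mod k" "m \<le> m'" "m < ms \<longleftrightarrow> m' < ms"
    and least: "(\<exists>N jg mg. 1 \<le> N \<and> ap_rep (N * c) jg mg) \<Longrightarrow> least_c_rep Ns js ms"
  shows "x = x'"
proof -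
  have reps: "ap_rep (x + c) j m" "ap_rep (x' + c) j' m'"
    using min_reps unfolding min_ap_rep_def by auto
  consider "j * k - m \<le> j' * k - m'" | "m = m'" "j' * k - m' \<le> j * k - m"
    | "m < m'" "j' * k - m' < j * k - m"
    using \<open>m \<le> m'\<close> by linarith
  then show ?thesis
  proof cases
    case 1
    then show ?thesis
      using PF_rep_eq[OF PF reps \<open>m \<le> m'\<close>] by blast
  next
    case 2
    then show ?thesis
      using PF_rep_eq[OF PF(2,1) reps(2,1)] by simp
  next
    case 3
    have "k dvd m' - m"
      using \<open>m mod k = m' mod k\<close> by (metis dvd_diff_commute mod_eq_dvd_iff)
    then obtain N jg mg where N: "1 \<le> N" "ap_rep (N * c) jg mg" "mg \<le> m'"
      "jg * k - mg \<le> j * k - m"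
      using PF_c_multiple_between[OF PF reps \<open>m < m'\<close>] by blast
    then have "least_c_rep Ns js ms"
      using least by blast
    then have "ms \<le> m"
      using least_c_rep_m_le[OF PF(1) min_reps(1)] N \<open>m < ms \<longleftrightarrow> m' < ms\<close> by fastforce
    then have "j * k - m < js * k - ms"
      using PF_slack_less_least_c_rep[OF PF(1) reps(1) \<open>least_c_rep Ns js ms\<close>] by blast
    moreover have "js * k - ms \<le> jg * k - mg"
      using least_c_rep_slack_le[OF PF(2) reps(2) \<open>least_c_rep Ns js ms\<close> N(1-3)] .
    ultimately show ?thesis
      using N(4) by linarith
  qed
qed

text \<open>If no positive multiple of \<open>c\<close> lies in \<open>T\<close>, then \<open>ms\<close> below is arbitrary and the
  labels are separated by the residue alone.\<close>
lemma card_PF_le: "card PF \<le> 2 * nat k"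
proof -
  have "\<exists>Ns js ms. (\<exists>N jg mg. 1 \<le> N \<and> ap_rep (N * c) jg mg) \<longrightarrow> least_c_rep Ns js ms"
    using ex_least_c_rep by blast
  then obtain Ns js ms
    where least: "(\<exists>N jg mg. 1 \<le> N \<and> ap_rep (N * c) jg mg) \<Longrightarrow> least_c_rep Ns js ms"
    by blast
  have "\<forall>x\<in>PF. \<exists>m j. min_ap_rep (x + c) j m"
    using PF_ex_rep ex_min_ap_rep by metis
  then obtain M where M: "\<forall>x\<in>PF. \<exists>j. min_ap_rep (x + c) j (M x)"
    by (rule bchoice[elim_format]) blast
  define label where "label x = (M x mod k, M x < ms)" for x
  have "inj_on label PF"
  proof (rule inj_onI)
    fix x x' assume PF: "x \<in> PF" "x' \<in> PF" and "label x = label x'"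
    then have same: "M x mod k = M x' mod k" "M x < ms \<longleftrightarrow> M x' < ms"
      unfolding label_def by auto
    obtain j j' where reps: "min_ap_rep (x + c) j (M x)" "min_ap_rep (x' + c) j' (M x')"
      using M PF by blast
    show "x = x'"
    proof (cases "M x \<le> M x'")
      case True
      then show ?thesis
        using PF_eq_of_same_label[OF PF reps same(1) _ same(2) least] by blast
    next
      case False
      then show ?thesis
        using PF_eq_of_same_label[OF PF(2,1) reps(2,1) same(1)[symmetric] _ same(2)[symmetric] least]
        by simp
    qed
  qed
  moreover have "label ` PF \<subseteq> {0..<k} \<times> UNIV"
    unfolding label_def using pos(3) by auto
  ultimately have "card PF \<le> card ({0..<k} \<times> (UNIV :: bool set))"
    by (intro card_inj_on_le) auto
  then show ?thesis
    by (simp add: card_cartesian_product)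
qed

end

theorem theorem3:
  fixes a d k c :: nat
  assumes "0 < a" and "0 < d" and "0 < k" and "0 < c"
    and "Gcd ({a + i * d | i. i \<le> k} \<union> {c}) = 1"
  shows "semigroup_type (gen_semigroup ({a + i * d | i. i \<le> k} \<union> {c})) \<le> 2 * k"
proof -
  interpret aa_semigroup "int a" "int d" "int k" "int c"
    by unfold_locales (use assms in auto)
  have "gen_semigroup ({a + i * d | i. i \<le> k} \<union> {c}) = S"
    unfolding S_def using gen_semigroup_aa[OF \<open>0 < k\<close>] .
  then show ?thesis
    unfolding semigroup_type_def using card_PF_le by simp
qed

end
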